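(* For finite groups $G$ and $H$, $P_e(G)\cong P_e(H)$ if and only if $C(G)\cong C(H)$ and $|G|=|H|$.
   Context: All groups are finite. For a group $X$, the enhanced power graph $P_e(X)$ is the simple graph with vertex set $X$ in which two distinct vertices $x,y$ are adjacent if and only if $\langle x,y\rangle$ is cyclic. Let $\mathrm{Cyc}(X)=\{x\in X : \langle x,y\rangle \text{ is cyclic for all } y\in X\}$. The cyclic graph $C(X)$ is the induced subgraph of $P_e(X)$ on the vertex set $X\setminus \mathrm{Cyc}(X)$, i.e. two vertices $x,y\in X\setminus\mathrm{Cyc}(X)$ are adjacent iff $\langle x,y\rangle$ is cyclic. *)

theory Defs
  imports "HOL-Algebra.Elementary_Groups"
begin

definition enh_adj :: "('a, 'b) monoid_scheme \<Rightarrow> 'a \<Rightarrow> 'a \<Rightarrow> bool" where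
  "enh_adj G x y \<longleftrightarrow> x \<noteq> y \<and> cyclic_group (subgroup_generated G {x, y})"

definition Cyc :: "('a, 'b) monoid_scheme \<Rightarrow> 'a set" where
  "Cyc G = {x \<in> carrier G. \<forall>y \<in> carrier G. cyclic_group (subgroup_generated G {x, y})}"

definition graph_iso :: "'a set \<Rightarrow> ('a \<Rightarrow> 'a \<Rightarrow> bool) \<Rightarrow> 'b set \<Rightarrow> ('b \<Rightarrow> 'b \<Rightarrow> bool) \<Rightarrow> bool" where
  "graph_iso V E W F \<longleftrightarrow> (\<exists>f. bij_betw f V W \<and> (\<forall>x\<in>V. \<forall>y\<in>V. E x y \<longleftrightarrow> F (f x) (f y)))"

text \<open>Enhanced power graph P_e(G) has vertices carrier G, edges enh_adj G;
  cyclic graph C(G) is the induced subgraph on carrier G - Cyc G.\<close>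

end

theory Submission
  imports Defs
begin

text \<open>A vertex of P_e(G) lies in Cyc(G) iff it is adjacent to every other vertex, so C(G) is
  P_e(G) with its dominating vertices deleted. Graph isomorphisms map dominating vertices onto
  dominating vertices, which gives one direction. Conversely, a dominating vertex is adjacent to
  everything, so an isomorphism between the graphs with dominating vertices deleted extends by
  an arbitrary bijection between the sets of dominating vertices; such a bijection exists because
  |G| = |H| forces these sets to have the same size.\<close>

definition dominating_vertices :: "'a set \<Rightarrow> ('a \<Rightarrow> 'a \<Rightarrow> bool) \<Rightarrow> 'a set" where
  "dominating_vertices V E = {x \<in> V. \<forall>y\<in>V. y \<noteq> x \<longrightarrow> E x y}"

lemma dominating_vertices_subset: "dominating_vertices V E \<subseteq> V"
  by (auto simp: dominating_vertices_def)

lemma dominating_vertices_adj: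
  assumes "symp E"
    and "x \<in> V" "y \<in> V" "x \<noteq> y" "x \<in> dominating_vertices V E \<or> y \<in> dominating_vertices V E"
  shows "E x y"
  using assms by (auto simp: dominating_vertices_def dest: sympD)

lemma graph_iso_card: "graph_iso V E W F \<Longrightarrow> card V = card W"
  unfolding graph_iso_def using bij_betw_same_card by blast

lemma bij_preserving_adj_image_dominating_vertices:
  assumes bij: "bij_betw f V W" and adj: "\<forall>x\<in>V. \<forall>y\<in>V. E x y \<longleftrightarrow> F (f x) (f y)"
  shows "f ` dominating_vertices V E = dominating_vertices W F"
proof -
  have image: "f ` V = W" and inj: "inj_on f V"
    using bij by (auto simp: bij_betw_def)
  have "f x \<in> dominating_vertices W F \<longleftrightarrow> x \<in> dominating_vertices V E" if "x \<in> V" for x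
    using that adj inj_on_eq_iff[OF inj] unfolding dominating_vertices_def image[symmetric]
    by auto
  then have "dominating_vertices V E = V \<inter> f -` dominating_vertices W F"
    using dominating_vertices_subset[of V E] by blast
  then show ?thesis
    using image dominating_vertices_subset[of W F] by auto
qed

lemma graph_iso_Diff_dominating_vertices:
  assumes "graph_iso V E W F"
  shows "graph_iso (V - dominating_vertices V E) E (W - dominating_vertices W F) F"
proof -
  obtain f where bij: "bij_betw f V W" and adj: "\<forall>x\<in>V. \<forall>y\<in>V. E x y \<longleftrightarrow> F (f x) (f y)"
    using assms by (auto simp: graph_iso_def)
  have "f ` (V - dominating_vertices V E) = W - dominating_vertices W F"
    using bij_preserving_adj_image_dominating_vertices[OF bij adj] bij
      inj_on_image_set_diff[of f V V "dominating_vertices V E"] dominating_vertices_subset[of V E]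
    by (simp add: bij_betw_def)
  then have "bij_betw f (V - dominating_vertices V E) (W - dominating_vertices W F)"
    by (rule bij_betw_subset[OF bij Diff_subset])
  with adj show ?thesis
    unfolding graph_iso_def by blast
qed

lemma bij_betw_piecewise:
  assumes "bij_betw g A A'" "bij_betw f (V - A) (W - A')" "A \<subseteq> V" "A' \<subseteq> W"
  shows "bij_betw (\<lambda>x. if x \<in> A then g x else f x) V W"
proof -
  have "bij_betw (\<lambda>x. if x \<in> A then g x else f x) (A \<union> (V - A)) (A' \<union> (W - A'))"
  proof (rule bij_betw_combine)
    show "bij_betw (\<lambda>x. if x \<in> A then g x else f x) A A'"
      using assms(1) by (rule bij_betw_cong[THEN iffD1, rotated]) simp
    show "bij_betw (\<lambda>x. if x \<in> A then g x else f x) (V - A) (W - A')"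
      using assms(2) by (rule bij_betw_cong[THEN iffD1, rotated]) simp
  qed blast
  with assms(3,4) show ?thesis
    by (simp add: Un_absorb1 Un_Diff_cancel)
qed

lemma graph_iso_of_Diff_dominating_vertices:
  assumes "finite V" "finite W" "card V = card W"
    and symE: "symp E" and irrE: "irreflp E"
    and symF: "symp F" and irrF: "irreflp F"
    and iso: "graph_iso (V - dominating_vertices V E) E (W - dominating_vertices W F) F"
  shows "graph_iso V E W F"
proof -
  let ?D = "dominating_vertices V E" and ?D' = "dominating_vertices W F"
  obtain f where f: "bij_betw f (V - ?D) (W - ?D')"
    and adj: "\<forall>x\<in>V - ?D. \<forall>y\<in>V - ?D. E x y \<longleftrightarrow> F (f x) (f y)"
    using iso by (auto simp: graph_iso_def)
  have "card (V - ?D) = card (W - ?D')"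
    using f by (rule bij_betw_same_card)
  then have "card ?D = card ?D'"
    using assms(1-3) dominating_vertices_subset[of V E] dominating_vertices_subset[of W F]
    by (metis card_Diff_subset card_mono diff_diff_cancel finite_subset)
  then obtain g where g: "bij_betw g ?D ?D'"
    using assms(1,2) dominating_vertices_subset
    by (metis finite_same_card_bij finite_subset)
  define h where "h x = (if x \<in> ?D then g x else f x)" for x
  have h: "bij_betw h V W"
    unfolding h_def using g f dominating_vertices_subset dominating_vertices_subset
    by (rule bij_betw_piecewise)
  have h_dom: "h x \<in> ?D' \<longleftrightarrow> x \<in> ?D" if "x \<in> V" for x
    using that f g by (auto simp: h_def bij_betw_def)
  have "E x y \<longleftrightarrow> F (h x) (h y)" if x: "x \<in> V" and y: "y \<in> V" for x y
  proof (cases "x = y")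
    case True
    then show ?thesis using irrE irrF by (simp add: irreflpD)
  next
    case False
    then have "h x \<noteq> h y" and "h x \<in> W" "h y \<in> W"
      using h x y by (auto simp: bij_betw_def inj_on_eq_iff)
    then show ?thesis
      using x y False adj h_dom[OF x] h_dom[OF y]
        dominating_vertices_adj[OF symE] dominating_vertices_adj[OF symF]
      by (auto simp: h_def)
  qed
  with h show ?thesis
    unfolding graph_iso_def by blast
qed

lemma symp_enh_adj: "symp (enh_adj G)"
  by (auto simp: symp_def enh_adj_def insert_commute)

lemma irreflp_enh_adj: "irreflp (enh_adj G)"
  by (simp add: irreflp_def enh_adj_def)

lemma (in group) Cyc_eq_dominating_vertices: "Cyc G = dominating_vertices (carrier G) (enh_adj G)"
  using cyclic_group_generated by (auto simp: Cyc_def dominating_vertices_def enh_adj_def)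

theorem lemma2:
  fixes G :: "('a, 'c) monoid_scheme" and H :: "('b, 'd) monoid_scheme"
  assumes "group G" and "finite (carrier G)" and "group H" and "finite (carrier H)"
  shows "graph_iso (carrier G) (enh_adj G) (carrier H) (enh_adj H) \<longleftrightarrow>
         (graph_iso (carrier G - Cyc G) (enh_adj G) (carrier H - Cyc H) (enh_adj H)
          \<and> card (carrier G) = card (carrier H))"
  unfolding group.Cyc_eq_dominating_vertices[OF assms(1)] group.Cyc_eq_dominating_vertices[OF assms(3)]
  using graph_iso_Diff_dominating_vertices graph_iso_card
    graph_iso_of_Diff_dominating_vertices[OF assms(2,4) _ symp_enh_adj irreflp_enh_adj
      symp_enh_adj irreflp_enh_adj]
  by blast

end
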